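(* Let $f:\mathbb{E}\to\mathbb{R}$ be radially lower semicontinuous on some neighborhood of $x\in\mathbb{E}$ and $\ell$-stable at $x$, and suppose $f'_D(x;u)=0$ for all $u\in\mathbb{E}$. Then for every $h\in\mathbb{E}$ the limit \[ \lim_{t\downarrow 0,\,h'\to h}\frac{f(x+th')-f(x+th)}{t^2} \] exists and equals $0$.
   Context: $\mathbb{E}$ is a real finite-dimensional Euclidean space. The lower Dini directional derivative is $f'_D(y;u)=\liminf_{t\downarrow 0}t^{-1}[f(y+tu)-f(y)]$. $f$ is radially lower semicontinuous on a set $U$ iff for every $y\in U$ and direction $v$ the function $s\mapsto f(y+sv)$ is lower semicontinuous on $\{s: y+sv\in U\}$. $f$ is $\ell$-stable at $x$ iff there exist a neighborhood $U$ of $x$ and $K>0$ with $|f'_D(y;u)-f'_D(x;u)|\le K\|y-x\|\,\|u\|$ for all $y\in U$, $u\in\mathbb{E}$. *)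

theory Defs
  imports "HOL-Analysis.Analysis"
begin

definition lower_dini :: "('a::real_normed_vector \<Rightarrow> real) \<Rightarrow> 'a \<Rightarrow> 'a \<Rightarrow> ereal" where
  "lower_dini f y u = Liminf (at_right 0) (\<lambda>t. ereal ((f (y + t *\<^sub>R u) - f y) / t))"

definition lsc_on :: "real set \<Rightarrow> (real \<Rightarrow> real) \<Rightarrow> bool" where
  "lsc_on S g \<longleftrightarrow> (\<forall>s\<in>S. \<forall>c. c < g s \<longrightarrow> (\<forall>\<^sub>F s' in at s within S. c < g s'))"

definition radially_lsc_on :: "('a::real_normed_vector \<Rightarrow> real) \<Rightarrow> 'a set \<Rightarrow> bool" where
  "radially_lsc_on f U \<longleftrightarrow>
     (\<forall>y\<in>U. \<forall>v. lsc_on {s. y + s *\<^sub>R v \<in> U} (\<lambda>s. f (y + s *\<^sub>R v)))"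

definition l_stable :: "('a::real_normed_vector \<Rightarrow> real) \<Rightarrow> 'a \<Rightarrow> bool" where
  "l_stable f x \<longleftrightarrow> (\<exists>U K. open U \<and> x \<in> U \<and> K > 0 \<and>
     (\<forall>y\<in>U. \<forall>u. \<bar>lower_dini f y u - lower_dini f x u\<bar> \<le> ereal (K * norm (y - x) * norm u)))"

end

theory Submission
  imports Defs
begin

text \<open>
  Zero Dini derivatives at \<open>x\<close> together with \<open>\<ell>\<close>-stability give
  \<open>f\<^sub>D'(z; u) \<le> K \<parallel>z - x\<parallel> \<parallel>u\<parallel>\<close> near \<open>x\<close>. For a radially lower semicontinuous
  function a one-sided bound on Dini derivatives along a segment bounds the increment
  of \<open>f\<close> along it (a mean value inequality), so on the ball of radius \<open>\<rho>\<close> about \<open>x\<close>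
  the function is \<open>K\<rho>\<close>-Lipschitz. The points \<open>x + t h\<close> and \<open>x + t h'\<close> lie in a ball
  of radius \<open>O(t)\<close> at distance \<open>t \<parallel>h' - h\<parallel>\<close>, hence their values differ by
  \<open>O(t\<^sup>2 \<parallel>h' - h\<parallel>)\<close>.
\<close>

lemma lsc_on_add_continuous:
  assumes "lsc_on S g" and "continuous_on S h"
  shows "lsc_on S (\<lambda>s. g s + h s)"
  unfolding lsc_on_def
proof (intro ballI allI impI)
  fix s c assume s: "s \<in> S" and c: "c < g s + h s"
  define d where "d = (g s + h s - c) / 2"
  have "\<forall>\<^sub>F s' in at s within S. g s - d < g s'"
    using assms(1) s c by (auto simp: lsc_on_def d_def)
  moreover have "\<forall>\<^sub>F s' in at s within S. h s - d < h s'"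
    using assms(2) s c by (intro order_tendstoD(1)) (auto simp: continuous_on_def d_def)
  ultimately show "\<forall>\<^sub>F s' in at s within S. c < g s' + h s'"
    by eventually_elim (simp add: d_def field_simps)
qed

lemma closed_sublevel_lsc_on:
  assumes "lsc_on S g" and "closed S"
  shows "closed {s \<in> S. g s \<le> c}"
  unfolding closed_limpt
proof (intro allI impI)
  fix s assume lim: "s islimpt {s \<in> S. g s \<le> c}"
  have "s \<in> S"
    using assms(2) islimpt_subset[OF lim, of S] unfolding closed_limpt by blast
  show "s \<in> {s \<in> S. g s \<le> c}"
  proof (rule ccontr)
    assume "s \<notin> {s \<in> S. g s \<le> c}"
    with \<open>s \<in> S\<close> assms(1) have "\<forall>\<^sub>F s' in at s within S. c < g s'"
      by (simp add: lsc_on_def not_le)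
    then obtain T where T: "open T" "s \<in> T" "\<forall>s'\<in>T. s' \<noteq> s \<longrightarrow> s' \<in> S \<longrightarrow> c < g s'"
      unfolding eventually_at_topological by blast
    moreover obtain y where "y \<in> {s \<in> S. g s \<le> c}" "y \<in> T" "y \<noteq> s"
      using lim T(1,2) unfolding islimpt_def by blast
    ultimately show False by force
  qed
qed

lemma Liminf_at_right_less_imp_ex:
  fixes q :: "real \<Rightarrow> real"
  assumes "Liminf (at_right 0) (\<lambda>\<tau>. ereal (q \<tau>)) < ereal c" and "0 < d"
  shows "\<exists>\<tau>\<in>{0<..<d}. q \<tau> < c"
proof (rule ccontr)
  assume none: "\<not> ?thesis"
  have "\<forall>\<^sub>F \<tau> in at_right 0. ereal c \<le> ereal (q \<tau>)"
    using eventually_at_right_real[OF \<open>0 < d\<close>] by eventually_elim (use none in \<open>force simp: not_less\<close>)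
  then have "ereal c \<le> Liminf (at_right 0) (\<lambda>\<tau>. ereal (q \<tau>))"
    by (rule Liminf_bounded)
  with assms(1) show False by simp
qed

text \<open>
  Tilting \<open>g\<close> by a slightly steeper line
  \<open>(M + e) s\<close>, the leftmost point \<open>s\<^sub>0\<close> where the tilted function drops to its value
  at \<open>1\<close> exists by lower semicontinuity; if \<open>s\<^sub>0 > 0\<close>, the Dini bound produces an even
  lower point just to its left.
\<close>

lemma lsc_on_left_dini_mean_value_ineq:
  fixes g :: "real \<Rightarrow> real"
  assumes lsc: "lsc_on {0..1} g"
    and dini: "\<forall>s\<in>{0<..1}. Liminf (at_right 0) (\<lambda>\<tau>. ereal ((g (s - \<tau>) - g s) / \<tau>)) \<le> ereal M"
  shows "g 0 - g 1 \<le> M"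
proof (rule field_le_epsilon)
  fix e :: real assume "0 < e"
  define \<phi> where "\<phi> s = g s + (M + e) * s" for s
  define A where "A = {s \<in> {0..1}. \<phi> s \<le> \<phi> 1}"
  define s\<^sub>0 where "s\<^sub>0 = Inf A"
  have "closed A"
    unfolding A_def \<phi>_def
    by (intro closed_sublevel_lsc_on lsc_on_add_continuous lsc continuous_intros closed_real_atLeastAtMost)
  moreover have "1 \<in> A" and "bdd_below A"
    by (auto simp: A_def intro: bdd_belowI[of _ 0])
  ultimately have "s\<^sub>0 \<in> A" and s\<^sub>0_min: "\<And>a. a \<in> A \<Longrightarrow> s\<^sub>0 \<le> a"
    unfolding s\<^sub>0_def by (auto intro: closed_contains_Inf cInf_lower)
  show "g 0 - g 1 \<le> M + e"
  proof (rule ccontr)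
    assume "\<not> ?thesis"
    then have "0 \<notin> A" by (simp add: A_def \<phi>_def)
    with \<open>s\<^sub>0 \<in> A\<close> have s\<^sub>0: "0 < s\<^sub>0" "s\<^sub>0 \<le> 1" "\<phi> s\<^sub>0 \<le> \<phi> 1"
      unfolding A_def by (auto simp: order.order_iff_strict)
    have "Liminf (at_right 0) (\<lambda>\<tau>. ereal ((g (s\<^sub>0 - \<tau>) - g s\<^sub>0) / \<tau>)) \<le> ereal M"
      using dini s\<^sub>0 by simp
    also have "\<dots> < ereal (M + e)"
      using \<open>0 < e\<close> by simp
    finally have dini_s\<^sub>0: "Liminf (at_right 0) (\<lambda>\<tau>. ereal ((g (s\<^sub>0 - \<tau>) - g s\<^sub>0) / \<tau>)) < ereal (M + e)" .
    obtain \<tau> where \<tau>: "0 < \<tau>" "\<tau> < s\<^sub>0" "(g (s\<^sub>0 - \<tau>) - g s\<^sub>0) / \<tau> < M + e"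
      using Liminf_at_right_less_imp_ex[OF dini_s\<^sub>0 \<open>0 < s\<^sub>0\<close>] by auto
    then have "\<phi> (s\<^sub>0 - \<tau>) < \<phi> s\<^sub>0"
      by (simp add: \<phi>_def divide_less_eq algebra_simps)
    with s\<^sub>0 \<tau> have "s\<^sub>0 - \<tau> \<in> A" by (simp add: A_def)
    with s\<^sub>0_min \<tau> show False by fastforce
  qed
qed

lemma radially_lsc_mean_value_ineq:
  fixes f :: "'a::real_normed_vector \<Rightarrow> real"
  assumes rad: "radially_lsc_on f U"
    and seg: "\<And>s. s \<in> {0..1} \<Longrightarrow> y + s *\<^sub>R v \<in> U"
    and dini: "\<And>s. s \<in> {0<..1} \<Longrightarrow> lower_dini f (y + s *\<^sub>R v) (- v) \<le> ereal M"
  shows "f y - f (y + v) \<le> M"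
proof -
  define g where "g s = f (y + s *\<^sub>R v)" for s
  have lsc_line: "lsc_on {s. y + s *\<^sub>R v \<in> U} g"
    using rad seg[of 0] unfolding radially_lsc_on_def g_def by simp
  have sub: "{0..1} \<subseteq> {s. y + s *\<^sub>R v \<in> U}"
    using seg by auto
  have "lsc_on {0..1} g"
    unfolding lsc_on_def
  proof (intro ballI allI impI)
    fix s c assume "s \<in> {0..1::real}" "c < g s"
    with lsc_line sub have "\<forall>\<^sub>F s' in at s within {s. y + s *\<^sub>R v \<in> U}. c < g s'"
      unfolding lsc_on_def by blast
    then show "\<forall>\<^sub>F s' in at s within {0..1}. c < g s'"
      by (rule filter_leD[OF at_le[OF sub]])
  qed
  moreover have "Liminf (at_right 0) (\<lambda>\<tau>. ereal ((g (s - \<tau>) - g s) / \<tau>)) =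
      lower_dini f (y + s *\<^sub>R v) (- v)" for s
    by (simp add: lower_dini_def g_def algebra_simps)
  ultimately have "g 0 - g 1 \<le> M"
    using dini by (intro lsc_on_left_dini_mean_value_ineq) simp_all
  then show ?thesis by (simp add: g_def)
qed

lemma l_stable_dini_bound:
  assumes "l_stable f x" and "\<And>u. lower_dini f x u = 0"
  obtains V K where "open V" "x \<in> V" "K > 0"
    "\<And>z u. z \<in> V \<Longrightarrow> lower_dini f z u \<le> ereal (K * norm (z - x) * norm u)"
proof -
  obtain V K where V: "open V" "x \<in> V" and "K > 0"
    and stab: "\<forall>z\<in>V. \<forall>u. \<bar>lower_dini f z u\<bar> \<le> ereal (K * norm (z - x) * norm u)"
    using assms unfolding l_stable_def by auto
  show thesis
  proof (rule that[OF V \<open>K > 0\<close>])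
    fix z u assume "z \<in> V"
    have "lower_dini f z u \<le> \<bar>lower_dini f z u\<bar>"
      by (cases "lower_dini f z u") auto
    also have "\<dots> \<le> ereal (K * norm (z - x) * norm u)"
      using stab \<open>z \<in> V\<close> by blast
    finally show "lower_dini f z u \<le> ereal (K * norm (z - x) * norm u)" .
  qed
qed

lemma dini_bound_lipschitz_on_cball:
  fixes f :: "'a::real_normed_vector \<Rightarrow> real"
  assumes rad: "radially_lsc_on f U" and ball: "ball x r \<subseteq> U"
    and dini: "\<And>z u. z \<in> ball x r \<Longrightarrow> lower_dini f z u \<le> ereal (K * norm (z - x) * norm u)"
    and "K \<ge> 0" and "\<rho> < r" and ab: "a \<in> cball x \<rho>" "b \<in> cball x \<rho>"
  shows "\<bar>f a - f b\<bar> \<le> K * \<rho> * dist a b"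
proof -
  have cball_ball: "cball x \<rho> \<subseteq> ball x r"
    using \<open>\<rho> < r\<close> by (auto simp: subset_iff)
  have one_side: "f p - f q \<le> K * \<rho> * dist p q" if p: "p \<in> cball x \<rho>" and q: "q \<in> cball x \<rho>" for p q
  proof -
    have seg_cball: "p + s *\<^sub>R (q - p) \<in> cball x \<rho>" if "s \<in> {0..1}" for s
    proof -
      have "(1 - s) *\<^sub>R p + s *\<^sub>R q \<in> cball x \<rho>"
        using convexD_alt[OF convex_cball p q] that by simp
      moreover have "(1 - s) *\<^sub>R p + s *\<^sub>R q = p + s *\<^sub>R (q - p)"
        by (simp add: algebra_simps)
      ultimately show ?thesis by simp
    qed
    have "f p - f (p + (q - p)) \<le> K * \<rho> * norm (q - p)"
    proof (rule radially_lsc_mean_value_ineq[OF rad])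
      fix s :: real assume "s \<in> {0<..1}"
      then have z: "p + s *\<^sub>R (q - p) \<in> cball x \<rho>"
        by (intro seg_cball) simp
      then have "norm (p + s *\<^sub>R (q - p) - x) \<le> \<rho>"
        by (simp add: dist_norm norm_minus_commute)
      then have bound: "K * norm (p + s *\<^sub>R (q - p) - x) * norm (- (q - p)) \<le> K * \<rho> * norm (q - p)"
        using \<open>K \<ge> 0\<close> by (simp add: norm_minus_commute mult_right_mono mult_left_mono)
      have "lower_dini f (p + s *\<^sub>R (q - p)) (- (q - p))
          \<le> ereal (K * norm (p + s *\<^sub>R (q - p) - x) * norm (- (q - p)))"
        using z cball_ball by (intro dini) blast
      also have "\<dots> \<le> ereal (K * \<rho> * norm (q - p))"
        using bound by simp
      finally show "lower_dini f (p + s *\<^sub>R (q - p)) (- (q - p)) \<le> ereal (K * \<rho> * norm (q - p))" .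
    qed (use seg_cball cball_ball ball in blast)
    then show ?thesis by (simp add: dist_norm norm_minus_commute)
  qed
  have "dist b a = dist a b"
    by (rule dist_commute)
  then show ?thesis
    using one_side[OF ab] one_side[OF ab(2,1)] by (simp add: abs_le_iff)
qed

lemma dini_bound_scaled_increment:
  fixes f :: "'a::real_normed_vector \<Rightarrow> real"
  assumes rad: "radially_lsc_on f U" and ball: "ball x r \<subseteq> U"
    and dini: "\<And>z u. z \<in> ball x r \<Longrightarrow> lower_dini f z u \<le> ereal (K * norm (z - x) * norm u)"
    and "K \<ge> 0" and t: "0 < t" "t * (norm h + 1) < r" and h': "dist h' h < 1"
  shows "\<bar>(f (x + t *\<^sub>R h') - f (x + t *\<^sub>R h)) / t\<^sup>2\<bar> \<le> K * (norm h + 1) * dist h' h"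
proof -
  define C where "C = norm h + 1"
  have "norm h' \<le> C"
    using h' norm_triangle_ineq2[of h' h] by (simp add: C_def dist_norm)
  then have "x + t *\<^sub>R h' \<in> cball x (t * C)" and "x + t *\<^sub>R h \<in> cball x (t * C)"
    using t(1) by (auto simp: dist_norm C_def mult_left_mono)
  then have "\<bar>f (x + t *\<^sub>R h') - f (x + t *\<^sub>R h)\<bar> \<le> K * (t * C) * dist (x + t *\<^sub>R h') (x + t *\<^sub>R h)"
    using t(2) by (intro dini_bound_lipschitz_on_cball[OF rad ball dini \<open>K \<ge> 0\<close>]) (simp_all add: C_def)
  also have "\<dots> = K * C * dist h' h * t\<^sup>2"
    using t(1) by (simp add: dist_norm power2_eq_square flip: scaleR_diff_right)
  finally show ?thesis
    using t(1) by (simp add: C_def divide_le_eq)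
qed

lemma dini_bound_eventually_scaled_increment:
  fixes f :: "'a::real_normed_vector \<Rightarrow> real"
  assumes rad: "radially_lsc_on f U" and ball: "ball x r \<subseteq> U"
    and dini: "\<And>z u. z \<in> ball x r \<Longrightarrow> lower_dini f z u \<le> ereal (K * norm (z - x) * norm u)"
    and "K \<ge> 0" and "r > 0"
  shows "\<forall>\<^sub>F p in at_right 0 \<times>\<^sub>F nhds h.
    norm ((\<lambda>(t, h'). (f (x + t *\<^sub>R h') - f (x + t *\<^sub>R h)) / t\<^sup>2) p) \<le> K * (norm h + 1) * dist (snd p) h"
  unfolding eventually_prod_filter
proof (intro exI conjI allI impI)
  have "norm h + 1 > 0" by (simp add: add_nonneg_pos)
  then show "\<forall>\<^sub>F t in at_right 0. t \<in> {0<..<r / (norm h + 1)}"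
    using eventually_at_right_real \<open>r > 0\<close> by simp
  show "\<forall>\<^sub>F h' in nhds h. h' \<in> ball h 1"
    by (rule eventually_nhds_in_open) auto
  fix t h' assume "t \<in> {0<..<r / (norm h + 1)}" and "h' \<in> ball h 1"
  with \<open>norm h + 1 > 0\<close> have "0 < t" "t * (norm h + 1) < r" "dist h' h < 1"
    by (simp_all add: pos_less_divide_eq dist_commute)
  then show "norm ((\<lambda>(t, h'). (f (x + t *\<^sub>R h') - f (x + t *\<^sub>R h)) / t\<^sup>2) (t, h'))
      \<le> K * (norm h + 1) * dist (snd (t, h')) h"
    using dini_bound_scaled_increment[OF rad ball dini \<open>K \<ge> 0\<close>] by simp
qed

theorem lemma4:
  fixes f :: "'a::euclidean_space \<Rightarrow> real" and x :: 'a
  assumes "\<exists>U. open U \<and> x \<in> U \<and> radially_lsc_on f U"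
    and "l_stable f x"
    and "\<And>u. lower_dini f x u = 0"
  shows "\<forall>h. ((\<lambda>(t, h'). (f (x + t *\<^sub>R h') - f (x + t *\<^sub>R h)) / t\<^sup>2) \<longlongrightarrow> 0)
               (at_right 0 \<times>\<^sub>F nhds h)"
proof
  fix h :: 'a
  obtain U where U: "open U" "x \<in> U" "radially_lsc_on f U"
    using assms(1) by blast
  obtain V K where V: "open V" "x \<in> V" and "K > 0"
    and dini: "\<And>z u. z \<in> V \<Longrightarrow> lower_dini f z u \<le> ereal (K * norm (z - x) * norm u)"
    using l_stable_dini_bound[OF assms(2,3)] by blast
  obtain r where "r > 0" and rU: "ball x r \<subseteq> U" and rV: "ball x r \<subseteq> V"
    using U V by (metis open_Int IntI open_contains_ball le_inf_iff)
  have dini_ball: "\<And>z u. z \<in> ball x r \<Longrightarrow> lower_dini f z u \<le> ereal (K * norm (z - x) * norm u)"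
    using dini rV by blast
  have "((\<lambda>p. dist (snd p) h) \<longlongrightarrow> dist h h) (at_right 0 \<times>\<^sub>F nhds h)"
    by (intro tendsto_dist filterlim_snd tendsto_const)
  then have "((\<lambda>p. K * (norm h + 1) * dist (snd p) h) \<longlongrightarrow> 0) (at_right 0 \<times>\<^sub>F nhds h)"
    by (intro tendsto_mult_right_zero) simp
  then show "((\<lambda>(t, h'). (f (x + t *\<^sub>R h') - f (x + t *\<^sub>R h)) / t\<^sup>2) \<longlongrightarrow> 0) (at_right 0 \<times>\<^sub>F nhds h)"
    using \<open>K > 0\<close>
    by (intro Lim_null_comparison[OF dini_bound_eventually_scaled_increment[OF U(3) rU dini_ball _ \<open>r > 0\<close>]])
      simp_all
qed

end
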